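(* In the setting below, with $\gamma=(1+\sqrt2)^2$, there exist constants $C_1,C_2>0$ such that for all $N\in\mathbb{N}_0$ and all $M\ge C_1N^2\gamma^N$, the matrix $\hat H_N^{(M)}$ is invertible and $\|(H_N^{(M)})^\dagger\|_{\ell^2}\le C_2\gamma^N$.
   Context: For $M,N\in\mathbb{N}$ and $0\le\delta\le2/M$ let $x_m=-1+\delta+2m/M$, $m=0,\dots,M-1$, and let $\hat H_N^{(M)}$ be the $N\times N$ matrix $(\hat H_N^{(M)})_{k\ell}=\frac1M\sum_{m=0}^{M-1}x_m^kx_m^\ell$, $k,\ell\in\{0,\dots,N-1\}$. $H_N^{(M)}$ is its lift to $\ell^2(\mathbb{N}_0)$ (acting as $\hat H_N^{(M)}$ on the first $N$ coordinates and as $0$ on the orthogonal complement), and, when $\hat H_N^{(M)}$ is invertible, $(H_N^{(M)})^\dagger$ is the lift of $(\hat H_N^{(M)})^{-1}$ in the same way. $\|\cdot\|_{\ell^2}$ is the operator norm on $\ell^2(\mathbb{N}_0)$. *)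

theory Defs
  imports Complex_Main "Jordan_Normal_Form.Matrix"
begin

definition node :: "nat \<Rightarrow> real \<Rightarrow> nat \<Rightarrow> real" where
  "node M \<delta> m = -1 + \<delta> + 2 * real m / real M"

definition hatH :: "nat \<Rightarrow> real \<Rightarrow> nat \<Rightarrow> real mat" where
  "hatH M \<delta> N = mat N N (\<lambda>(k, l). (1 / real M) * (\<Sum>m<M. node M \<delta> m ^ k * node M \<delta> m ^ l))"

text \<open>Inverse of a square matrix (meaningful when it is invertible).\<close>
definition inv_mat :: "real mat \<Rightarrow> real mat" where
  "inv_mat A = (THE B. B \<in> carrier_mat (dim_row A) (dim_row A) \<and> inverts_mat A B \<and> inverts_mat B A)"

text \<open>Lift of a finite matrix to an operator on sequences nat => real (l^2(N_0)):
  acts as the matrix on the first coordinates and as 0 on the orthogonal complement.\<close>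
definition lift_op :: "real mat \<Rightarrow> (nat \<Rightarrow> real) \<Rightarrow> (nat \<Rightarrow> real)" where
  "lift_op A v = (\<lambda>i. if i < dim_row A then (\<Sum>j<dim_col A. A $$ (i, j) * v j) else 0)"

definition ell2_norm :: "(nat \<Rightarrow> real) \<Rightarrow> real" where
  "ell2_norm v = sqrt (\<Sum>i. (v i)\<^sup>2)"

definition ell2_opnorm :: "((nat \<Rightarrow> real) \<Rightarrow> (nat \<Rightarrow> real)) \<Rightarrow> real" where
  "ell2_opnorm T = Sup {ell2_norm (T v) | v. summable (\<lambda>i. (v i)\<^sup>2) \<and> ell2_norm v \<le> 1}"

end

theory Submission
  imports Defs "HOL-Analysis.Convex" "HOL-Analysis.L2_Norm" "HOL-Computational_Algebra.Polynomial"
    "Jordan_Normal_Form.Determinant"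
begin

(* For p = sum_k c_k x^k the continuous Gram form sum_{k,l} c_k c_l (1/2) int_{-1}^{1} x^(k+l) dx
   equals (1/2) int_{-1}^{1} p^2.  Expanding p in Legendre polynomials P_n and applying
   Cauchy-Schwarz bounds sum_k c_k^2 by this integral times the sum over n < N of the squared
   coefficient norm of P_n divided by its squared L^2 norm; by Rodrigues' formula and a central
   binomial estimate the n-th term is at most 4 gamma^n, so the continuous form is at least
   gamma^(-N) sum_k c_k^2.  Each entry of hatH is a Riemann sum that differs from the corresponding
   integral by at most 4N/M, so the two forms differ by at most (4N^2/M) sum_k c_k^2, which is half
   of the lower bound once M >= 8 N^2 gamma^N.  A matrix whose quadratic form is at least
   alpha |c|^2 is invertible with inverse of operator norm at most 1/alpha; hence C1 = 8, C2 = 2. *)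

lemma weighted_Cauchy_Schwarz_sum:
  fixes w a b :: "'i \<Rightarrow> real"
  assumes "\<And>i. i \<in> A \<Longrightarrow> 0 \<le> w i"
  shows "(\<Sum>i\<in>A. w i * a i * b i)\<^sup>2 \<le> (\<Sum>i\<in>A. w i * (a i)\<^sup>2) * (\<Sum>i\<in>A. w i * (b i)\<^sup>2)"
proof -
  have "sqrt (w i) * sqrt (w i) = w i" if "i \<in> A" for i
    using assms[OF that] by simp
  then have "(\<Sum>i\<in>A. w i * a i * b i) = (\<Sum>i\<in>A. (sqrt (w i) * a i) * (sqrt (w i) * b i))"
    and "(\<Sum>i\<in>A. w i * (a i)\<^sup>2) = (\<Sum>i\<in>A. (sqrt (w i) * a i)\<^sup>2)"
    and "(\<Sum>i\<in>A. w i * (b i)\<^sup>2) = (\<Sum>i\<in>A. (sqrt (w i) * b i)\<^sup>2)"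
    by (auto intro!: sum.cong simp: power2_eq_square mult_ac)
  then show ?thesis
    using Cauchy_Schwarz_ineq_sum[of "\<lambda>i. sqrt (w i) * a i" "\<lambda>i. sqrt (w i) * b i" A] by simp
qed

section \<open>Means of polynomials over \<open>[-1, 1]\<close>\<close>

text \<open>\<open>mean_power j\<close> and \<open>poly_mean p\<close> are the means \<open>(1/2) \<integral>\<^sub>-\<^sub>1\<^sup>1 x\<^sup>j dx\<close> and
  \<open>(1/2) \<integral>\<^sub>-\<^sub>1\<^sup>1 p(x) dx\<close>, defined through the coefficients of \<open>p\<close>.\<close>

definition mean_power :: "nat \<Rightarrow> real" where
  "mean_power j = (if even j then 1 / real (Suc j) else 0)"

definition poly_mean :: "real poly \<Rightarrow> real" where
  "poly_mean p = (\<Sum>j\<le>degree p. coeff p j * mean_power j)"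

lemma poly_mean_eq_sum: "degree p \<le> n \<Longrightarrow> poly_mean p = (\<Sum>j\<le>n. coeff p j * mean_power j)"
  unfolding poly_mean_def by (rule sum.mono_neutral_left) (auto simp: coeff_eq_0)

lemma poly_mean_add: "poly_mean (p + q) = poly_mean p + poly_mean q"
proof -
  define n where "n = max (degree p) (degree q)"
  have "degree (p + q) \<le> n" unfolding n_def by (rule degree_add_le_max)
  then show ?thesis
    using poly_mean_eq_sum[of p n] poly_mean_eq_sum[of q n] poly_mean_eq_sum[of "p + q" n]
    by (simp add: n_def algebra_simps sum.distrib)
qed

lemma poly_mean_smult: "poly_mean (smult a p) = a * poly_mean p"
  using poly_mean_eq_sum[of "smult a p" "degree p"] poly_mean_eq_sum[of p "degree p"]
  by (simp add: sum_distrib_left algebra_simps)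

lemma poly_mean_0 [simp]: "poly_mean 0 = 0"
  by (simp add: poly_mean_def)

lemma poly_mean_sum: "poly_mean (\<Sum>i\<in>A. f i) = (\<Sum>i\<in>A. poly_mean (f i))"
  by (induction A rule: infinite_finite_induct) (auto simp: poly_mean_add)

lemma poly_mean_monom: "poly_mean (monom a j) = a * mean_power j"
proof -
  have "poly_mean (monom a j) = (\<Sum>i\<le>j. coeff (monom a j) i * mean_power i)"
    by (rule poly_mean_eq_sum) (simp add: degree_monom_le)
  also have "\<dots> = (\<Sum>i\<le>j. if i = j then a * mean_power j else 0)"
    by (intro sum.cong) (auto simp: coeff_monom)
  finally show ?thesis by simp
qed

lemma poly_mean_pderiv: "poly_mean (pderiv p) = (poly p 1 - poly p (-1)) / 2"
proof -
  define n where "n = degree p"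
  have "poly_mean (pderiv p) = (\<Sum>j\<le>n. coeff p (Suc j) * (if even j then 1 else 0))"
    by (rule trans[OF poly_mean_eq_sum sum.cong])
      (auto simp: n_def degree_pderiv coeff_pderiv mean_power_def)
  also have "\<dots> = (\<Sum>j\<le>Suc n. coeff p j * (if odd j then 1 else 0))"
    by (subst sum.atMost_Suc_shift) simp
  also have "\<dots> = (\<Sum>j\<le>n. coeff p j * (if odd j then 1 else 0))"
    by (simp add: n_def coeff_eq_0)
  also have "\<dots> = (\<Sum>j\<le>n. (coeff p j * 1 ^ j - coeff p j * (-1) ^ j) / 2)"
    by (intro sum.cong) auto
  also have "\<dots> = (poly p 1 - poly p (-1)) / 2"
    by (simp add: poly_altdef n_def sum_divide_distrib[symmetric] sum_subtractf del: power_one)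
  finally show ?thesis .
qed

lemma poly_mean_mult_pderiv:
  "poly_mean (q * pderiv v) =
     (poly q 1 * poly v 1 - poly q (-1) * poly v (-1)) / 2 - poly_mean (pderiv q * v)"
  using poly_mean_pderiv[of "q * v"] by (simp add: pderiv_mult poly_mean_add algebra_simps)

lemma poly_mean_mult_higher_pderiv:
  assumes "\<And>i x. i < k \<Longrightarrow> x\<^sup>2 = 1 \<Longrightarrow> poly ((pderiv ^^ i) v) x = 0"
  shows "poly_mean (q * (pderiv ^^ k) v) = (-1) ^ k * poly_mean ((pderiv ^^ k) q * v)"
  using assms
proof (induction k arbitrary: q)
  case 0
  then show ?case by simp
next
  case (Suc k)
  have "poly_mean (q * (pderiv ^^ Suc k) v) = - poly_mean (pderiv q * (pderiv ^^ k) v)"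
    using Suc.prems[of k 1] Suc.prems[of k "-1"] by (simp add: poly_mean_mult_pderiv)
  also have "\<dots> = - ((-1) ^ k * poly_mean ((pderiv ^^ k) (pderiv q) * v))"
    using Suc.IH[of "pderiv q"] Suc.prems by simp
  finally show ?case by (simp add: funpow_swap1)
qed

section \<open>Legendre polynomials\<close>

text \<open>Rodrigues' formula: \<open>legendre_rodrigues n = 2\<^sup>n n! P\<^sub>n\<close> for the Legendre polynomial \<open>P\<^sub>n\<close>.\<close>

definition legendre_rodrigues :: "nat \<Rightarrow> real poly" where
  "legendre_rodrigues n = (pderiv ^^ n) ([:-1, 0, 1:] ^ n)"

lemma x2m1_power_dvd_higher_pderiv:
  "i \<le> n \<Longrightarrow> [:-1, 0, 1:] ^ (n - i) dvd (pderiv ^^ i) ([:-1, 0, 1 :: real:] ^ n)"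
proof (induction i)
  case 0
  then show ?case by simp
next
  case (Suc i)
  then obtain r where r: "(pderiv ^^ i) ([:-1, 0, 1 :: real:] ^ n) = [:-1, 0, 1:] ^ Suc (n - Suc i) * r"
    by (auto elim!: dvdE simp: Suc_diff_Suc)
  have "(pderiv ^^ Suc i) ([:-1, 0, 1:] ^ n) =
      [:-1, 0, 1:] ^ (n - Suc i) * ([:-1, 0, 1:] * pderiv r
        + smult (of_nat (Suc (n - Suc i))) r * pderiv [:-1, 0, 1:])"
    by (simp only: funpow.simps comp_apply r pderiv_mult pderiv_power_Suc) (simp add: algebra_simps)
  then show ?case by simp
qed

lemma poly_higher_pderiv_x2m1_power:
  assumes "i < n" "x\<^sup>2 = 1"
  shows "poly ((pderiv ^^ i) ([:-1, 0, 1 :: real:] ^ n)) x = 0"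
proof -
  obtain r where "(pderiv ^^ i) ([:-1, 0, 1 :: real:] ^ n) = [:-1, 0, 1:] ^ (n - i) * r"
    using x2m1_power_dvd_higher_pderiv[of i n] assms(1) by (auto elim!: dvdE)
  moreover have "poly [:-1, 0, 1:] x = 0"
    using assms(2) by (simp add: power2_eq_square)
  ultimately show ?thesis
    using assms(1) by simp
qed

lemma degree_legendre_rodrigues: "degree (legendre_rodrigues n) = n"
  by (simp add: legendre_rodrigues_def degree_higher_pderiv degree_power_eq)

lemma coeff_legendre_rodrigues:
  "coeff (legendre_rodrigues n) k = pochhammer (real (Suc k)) n * coeff ([:-1, 0, 1:] ^ n) (k + n)"
  by (simp add: legendre_rodrigues_def coeff_higher_pderiv)

lemma lead_coeff_legendre_rodrigues:
  "coeff (legendre_rodrigues n) n = pochhammer (real (Suc n)) n"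
proof -
  have "coeff ([:-1, 0, 1 :: real:] ^ n) (n + n) = lead_coeff ([:-1, 0, 1 :: real:] ^ n)"
    by (simp add: degree_power_eq)
  then show ?thesis
    by (simp add: coeff_legendre_rodrigues lead_coeff_power)
qed

lemma higher_pderiv_legendre_rodrigues:
  "(pderiv ^^ n) (legendre_rodrigues n) = [:fact (2 * n):]"
proof (rule poly_eqI)
  fix k
  show "coeff ((pderiv ^^ n) (legendre_rodrigues n)) k = coeff [:fact (2 * n):] k"
  proof (cases k)
    case 0
    have "pochhammer (1 :: real) (n + n) = pochhammer 1 n * pochhammer (1 + real n) n"
      by (rule pochhammer_product')
    then show ?thesis
      using 0 by (simp add: coeff_higher_pderiv lead_coeff_legendre_rodrigues pochhammer_fact mult_2)
  next
    case (Suc j)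
    then show ?thesis
      by (simp add: coeff_higher_pderiv coeff_eq_0 degree_legendre_rodrigues)
  qed
qed

lemma poly_mean_legendre_rodrigues_mult:
  "poly_mean (q * legendre_rodrigues n) = (-1) ^ n * poly_mean ((pderiv ^^ n) q * [:-1, 0, 1:] ^ n)"
  unfolding legendre_rodrigues_def
  by (rule poly_mean_mult_higher_pderiv) (rule poly_higher_pderiv_x2m1_power)

lemma poly_mean_legendre_rodrigues_orthogonal:
  assumes "m \<noteq> n"
  shows "poly_mean (legendre_rodrigues m * legendre_rodrigues n) = 0"
proof -
  have "poly_mean (legendre_rodrigues m * legendre_rodrigues n) = 0" if "m < n" for m n
  proof -
    have "(pderiv ^^ n) (legendre_rodrigues m) = 0"
      using that by (intro poly_eqI) (simp add: coeff_higher_pderiv coeff_eq_0 degree_legendre_rodrigues)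
    then show ?thesis
      by (simp add: poly_mean_legendre_rodrigues_mult)
  qed
  then show ?thesis
    using assms by (metis mult.commute linorder_neqE_nat)
qed

lemma poly_mean_x2m1_power_Suc:
  "(2 * real k + 3) * poly_mean ([:-1, 0, 1:] ^ Suc k) = - 2 * (real k + 1) * poly_mean ([:-1, 0, 1:] ^ k)"
proof -
  define x u v where "x = [:0, 1 :: real:]" and "u = [:-1, 0, 1 :: real:] ^ k"
    and "v = [:-1, 0, 1 :: real:] ^ Suc k"
  have "x * pderiv [:-1, 0, 1:] = smult 2 ([:-1, 0, 1:] + 1)"
    unfolding x_def by (simp add: pderiv_pCons one_pCons)
  then have "x * pderiv v = smult (2 * (real k + 1)) ([:-1, 0, 1:] * u + u)"
    unfolding u_def v_def pderiv_power_Suc mult.left_commute[of x] by (simp add: algebra_simps)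
  also have "[:-1, 0, 1:] * u = v"
    unfolding u_def v_def by simp
  finally have "poly_mean (x * pderiv v) = 2 * (real k + 1) * (poly_mean v + poly_mean u)"
    by (simp only: poly_mean_smult poly_mean_add)
  moreover have "poly v 1 = 0" "poly v (-1) = 0"
    unfolding v_def by simp_all
  then have "poly_mean (x * pderiv v) = - poly_mean v"
    using poly_mean_mult_pderiv[of x v] by (simp add: x_def pderiv_pCons)
  ultimately show ?thesis
    unfolding u_def[symmetric] v_def[symmetric] by (simp add: algebra_simps)
qed

lemma poly_mean_x2m1_power:
  "poly_mean ([:-1, 0, 1:] ^ n) = (-1) ^ n * 4 ^ n * (fact n)\<^sup>2 / fact (2 * n + 1)"
proof (induction n)
  case 0
  then show ?case by (simp add: poly_mean_def mean_power_def)
next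
  case (Suc k)
  define F :: real where "F = fact (2 * k + 1)"
  have pos: "F > 0" "2 * real k + 3 > 0" "2 * real k + 2 > 0"
    unfolding F_def by simp_all
  have "poly_mean ([:-1, 0, 1:] ^ Suc k) = - 2 * (real k + 1) * poly_mean ([:-1, 0, 1:] ^ k) / (2 * real k + 3)"
    using poly_mean_x2m1_power_Suc[of k] pos by (simp add: field_simps)
  also have "\<dots> = - 2 * (real k + 1) * ((-1) ^ k * 4 ^ k * (fact k)\<^sup>2) / ((2 * real k + 3) * F)"
    unfolding Suc.IH F_def by simp
  also have "\<dots> = (-1) ^ Suc k * 4 ^ Suc k * ((real k + 1) * fact k)\<^sup>2
      / ((2 * real k + 3) * (2 * real k + 2) * F)"
  proof -
    have nz: "(2 * real k + 3) * F \<noteq> 0" "(2 * real k + 3) * (2 * real k + 2) * F \<noteq> 0"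
      using pos by simp_all
    show ?thesis
      unfolding frac_eq_eq[OF nz] by (simp add: algebra_simps power2_eq_square)
  qed
  also have "(2 * real k + 3) * (2 * real k + 2) * F = fact (2 * Suc k + 1)"
    unfolding F_def by (simp add: algebra_simps)
  finally show ?case
    by (simp add: algebra_simps)
qed

lemma poly_mean_legendre_rodrigues_square:
  "poly_mean (legendre_rodrigues n * legendre_rodrigues n) = 4 ^ n * (fact n)\<^sup>2 / real (2 * n + 1)"
proof -
  have "fact (2 * n + 1) = real (2 * n + 1) * (fact (2 * n) :: real)"
    by (simp del: of_nat_Suc)
  moreover have "(-1 :: real) ^ n * (-1) ^ n = 1"
    by (simp flip: power_mult_distrib)
  ultimately show ?thesis
    by (simp add: poly_mean_legendre_rodrigues_mult higher_pderiv_legendre_rodrigues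
        poly_mean_smult poly_mean_x2m1_power)
qed

lemma legendre_rodrigues_basis:
  assumes "\<forall>k\<ge>N. coeff p k = 0"
  shows "\<exists>\<beta>. p = (\<Sum>n<N. smult (\<beta> n) (legendre_rodrigues n))"
  using assms
proof (induction N arbitrary: p)
  case 0
  then have "p = 0" by (intro poly_eqI) auto
  then show ?case by simp
next
  case (Suc N)
  define b where "b = coeff p N / coeff (legendre_rodrigues N) N"
  have "coeff (legendre_rodrigues N) N \<noteq> 0"
    using pochhammer_pos[of "real (Suc N)" N] by (simp add: lead_coeff_legendre_rodrigues)
  have "coeff (p - smult b (legendre_rodrigues N)) k = 0" if "k \<ge> N" for k
  proof (cases "k = N")
    case True
    then show ?thesis
      using \<open>coeff (legendre_rodrigues N) N \<noteq> 0\<close> by (simp add: b_def)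
  next
    case False
    with that have "N < k"
      by simp
    then have "coeff (legendre_rodrigues N) k = 0" "coeff p k = 0"
      using Suc.prems by (auto simp: coeff_eq_0 degree_legendre_rodrigues Suc_le_eq)
    then show ?thesis
      by simp
  qed
  then have "\<forall>k\<ge>N. coeff (p - smult b (legendre_rodrigues N)) k = 0"
    by blast
  then obtain \<beta> where \<beta>: "p - smult b (legendre_rodrigues N) = (\<Sum>n<N. smult (\<beta> n) (legendre_rodrigues n))"
    using Suc.IH by blast
  have "p = (\<Sum>n<N. smult (\<beta> n) (legendre_rodrigues n)) + smult b (legendre_rodrigues N)"
    using \<beta> by (simp only: diff_eq_eq)
  also have "(\<Sum>n<N. smult (\<beta> n) (legendre_rodrigues n)) = (\<Sum>n<N. smult ((\<beta>(N := b)) n) (legendre_rodrigues n))"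
    by (intro sum.cong) auto
  finally have "p = (\<Sum>n<Suc N. smult ((\<beta>(N := b)) n) (legendre_rodrigues n))"
    by simp
  then show ?case by blast
qed

lemma poly_mean_square_legendre_sum:
  "poly_mean ((\<Sum>n<N. smult (\<beta> n) (legendre_rodrigues n)) * (\<Sum>n<N. smult (\<beta> n) (legendre_rodrigues n)))
     = (\<Sum>n<N. poly_mean (legendre_rodrigues n * legendre_rodrigues n) * (\<beta> n)\<^sup>2)"
proof -
  have "poly_mean ((\<Sum>n<N. smult (\<beta> n) (legendre_rodrigues n)) * (\<Sum>n<N. smult (\<beta> n) (legendre_rodrigues n)))
      = (\<Sum>n<N. \<Sum>m<N. \<beta> n * \<beta> m * poly_mean (legendre_rodrigues n * legendre_rodrigues m))"
    by (simp add: sum_product poly_mean_sum poly_mean_smult mult.assoc mult.left_commute)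
  also have "\<dots> = (\<Sum>n<N. \<Sum>m<N. if m = n then poly_mean (legendre_rodrigues n * legendre_rodrigues n) * (\<beta> n)\<^sup>2 else 0)"
    by (intro sum.cong refl) (auto simp: poly_mean_legendre_rodrigues_orthogonal power2_eq_square)
  finally show ?thesis by simp
qed

lemma poly_mean_square_nonneg: "poly_mean (p * p) \<ge> 0"
proof -
  have "\<forall>k\<ge>Suc (degree p). coeff p k = 0"
    by (auto intro: coeff_eq_0)
  then have "\<exists>N \<beta>. p = (\<Sum>n<N. smult (\<beta> n) (legendre_rodrigues n))"
    using legendre_rodrigues_basis by blast
  then obtain N \<beta> where "p = (\<Sum>n<N. smult (\<beta> n) (legendre_rodrigues n))"
    by blast
  then show ?thesis
    by (simp only: poly_mean_square_legendre_sum)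
      (intro sum_nonneg mult_nonneg_nonneg, simp_all add: poly_mean_legendre_rodrigues_square)
qed

lemma sum_coeff_power2_le_poly_mean_square:
  assumes "\<forall>k\<ge>N. coeff p k = 0"
  shows "(\<Sum>k<N. (coeff p k)\<^sup>2) \<le>
    (\<Sum>n<N. (\<Sum>k<N. (coeff (legendre_rodrigues n) k)\<^sup>2) / poly_mean (legendre_rodrigues n * legendre_rodrigues n))
      * poly_mean (p * p)"
proof -
  obtain \<beta> where \<beta>: "p = (\<Sum>n<N. smult (\<beta> n) (legendre_rodrigues n))"
    using legendre_rodrigues_basis[OF assms] by blast
  define w where "w n = poly_mean (legendre_rodrigues n * legendre_rodrigues n)" for n
  have w_pos: "w n > 0" for n
    by (simp add: w_def poly_mean_legendre_rodrigues_square)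
  have "(coeff p k)\<^sup>2 \<le> poly_mean (p * p) * (\<Sum>n<N. w n * (coeff (legendre_rodrigues n) k / w n)\<^sup>2)"
    for k
  proof -
    have "(coeff p k)\<^sup>2 = (\<Sum>n<N. w n * \<beta> n * (coeff (legendre_rodrigues n) k / w n))\<^sup>2"
      using w_pos by (simp add: \<beta> coeff_sum less_imp_neq[symmetric])
    also have "\<dots> \<le> (\<Sum>n<N. w n * (\<beta> n)\<^sup>2) * (\<Sum>n<N. w n * (coeff (legendre_rodrigues n) k / w n)\<^sup>2)"
      by (rule weighted_Cauchy_Schwarz_sum) (simp add: w_pos less_imp_le)
    also have "(\<Sum>n<N. w n * (\<beta> n)\<^sup>2) = poly_mean (p * p)"
      unfolding \<beta> w_def by (rule poly_mean_square_legendre_sum[symmetric])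
    finally show ?thesis .
  qed
  then have "(\<Sum>k<N. (coeff p k)\<^sup>2) \<le>
      (\<Sum>k<N. poly_mean (p * p) * (\<Sum>n<N. w n * (coeff (legendre_rodrigues n) k / w n)\<^sup>2))"
    by (intro sum_mono)
  also have "\<dots> = poly_mean (p * p) * (\<Sum>k<N. \<Sum>n<N. (coeff (legendre_rodrigues n) k)\<^sup>2 / w n)"
    using w_pos by (simp add: sum_distrib_left power_divide power2_eq_square less_imp_neq[symmetric])
  also have "\<dots> = poly_mean (p * p) * (\<Sum>n<N. (\<Sum>k<N. (coeff (legendre_rodrigues n) k)\<^sup>2) / w n)"
    by (subst sum.swap) (simp add: sum_divide_distrib)
  finally show ?thesis
    by (simp add: w_def mult.commute)
qed

section \<open>Growth of the Legendre coefficients\<close>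

lemma pochhammer_Suc_diff_binomial:
  assumes "n \<le> m"
  shows "pochhammer (real (Suc (m - n))) n = fact n * real (m choose n)"
  using assms by (simp add: binomial_gbinomial gbinomial_pochhammer' of_nat_diff add.commute)

lemma sum_abs_coeff_legendre_rodrigues:
  "(\<Sum>k\<le>n. \<bar>coeff (legendre_rodrigues n) k\<bar>) \<le> fact n * (\<Sum>i\<le>n. real (n choose i) * real ((2 * i) choose n))"
proof -
  have "[:-1, 0, 1 :: real:] ^ n = (\<Sum>i\<le>n. of_nat (n choose i) * monom 1 2 ^ i * [:-1:] ^ (n - i))"
    unfolding binomial_ring[symmetric] by (simp add: monom_altdef power2_eq_square)
  then have "coeff ([:-1, 0, 1 :: real:] ^ n) j = (\<Sum>i\<le>n. if j = 2 * i then real (n choose i) * (-1) ^ (n - i) else 0)" for j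
    by (auto simp: coeff_sum monom_power of_nat_poly poly_const_pow coeff_monom intro!: sum.cong)
  then have abs_coeff: "\<bar>coeff ([:-1, 0, 1 :: real:] ^ n) j\<bar> \<le> (\<Sum>i\<le>n. if j = 2 * i then real (n choose i) else 0)" for j
    by (auto intro!: order.trans[OF sum_abs] sum_mono simp: abs_mult)
  have "(\<Sum>k\<le>n. \<bar>coeff (legendre_rodrigues n) k\<bar>)
      \<le> (\<Sum>k\<le>n. pochhammer (real (Suc k)) n * (\<Sum>i\<le>n. if k + n = 2 * i then real (n choose i) else 0))"
    unfolding coeff_legendre_rodrigues abs_mult
    by (intro sum_mono mult_mono abs_coeff) (auto simp: pochhammer_nonneg intro: sum_nonneg)
  also have "\<dots> = (\<Sum>i\<le>n. \<Sum>k\<le>n. if k = 2 * i - n \<and> n \<le> 2 * i then pochhammer (real (Suc k)) n * real (n choose i) else 0)"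
    by (subst sum.swap) (auto simp: sum_distrib_left intro!: sum.cong)
  also have "\<dots> = (\<Sum>i\<le>n. if n \<le> 2 * i then pochhammer (real (Suc (2 * i - n))) n * real (n choose i) else 0)"
    by (intro sum.cong refl) (auto simp: sum.delta)
  also have "\<dots> = (\<Sum>i\<le>n. fact n * (real (n choose i) * real ((2 * i) choose n)))"
    by (intro sum.cong refl) (auto simp: pochhammer_Suc_diff_binomial simp del: of_nat_Suc)
  also have "\<dots> = fact n * (\<Sum>i\<le>n. real (n choose i) * real ((2 * i) choose n))"
    by (simp add: sum_distrib_left)
  finally show ?thesis .
qed

lemma coeff_one_one_power: "coeff ([:1, 1:] ^ m) k = real (m choose k)"
proof (cases "k \<le> m")
  case True
  then show ?thesis by (simp add: coeff_linear_poly_power)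
next
  case False
  then show ?thesis by (simp add: coeff_eq_0 degree_linear_power)
qed

lemma coeff_x2p2_power:
  "coeff ([:2, 0, 1:] ^ t) t = (if even t then real (t choose (t div 2)) * 2 ^ (t div 2) else 0)"
proof -
  have "[:2, 0, 1 :: real:] ^ t = (\<Sum>l\<le>t. of_nat (t choose l) * monom 1 2 ^ l * [:2:] ^ (t - l))"
    unfolding binomial_ring[symmetric] by (simp add: monom_altdef power2_eq_square)
  then have "coeff ([:2, 0, 1:] ^ t) t = (\<Sum>l\<le>t. if l = t div 2 \<and> even t then real (t choose l) * 2 ^ (t - l) else 0)"
    by (auto simp: coeff_sum monom_power of_nat_poly coeff_monom poly_const_pow smult_monom mult.commute
        intro!: sum.cong)
  also have "\<dots> = (if even t then real (t choose (t div 2)) * 2 ^ (t div 2) else 0)"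
    by (auto simp: sum.delta elim!: evenE)
  finally show ?thesis .
qed

lemma sum_binomial_binomial_double:
  "(\<Sum>i\<le>n. real (n choose i) * real ((2 * i) choose n))
     = (\<Sum>t\<le>n. real (n choose t) * 2 ^ (n - t) * coeff ([:2, 0, 1:] ^ t) t)"
proof -
  have "([:1, 1:] ^ 2 + 1) ^ n = (\<Sum>i\<le>n. of_nat (n choose i) * ([:1, 1 :: real:] ^ 2) ^ i * 1 ^ (n - i))"
    by (rule binomial_ring)
  then have "coeff (([:1, 1:] ^ 2 + 1) ^ n) n = (\<Sum>i\<le>n. real (n choose i) * real ((2 * i) choose n))"
    by (simp add: coeff_sum of_nat_poly coeff_one_one_power mult.commute flip: power_mult)
  moreover have "([:2, 0, 1:] + [:0, 2:]) ^ n = (\<Sum>t\<le>n. of_nat (n choose t) * [:2, 0, 1 :: real:] ^ t * [:0, 2:] ^ (n - t))"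
    by (rule binomial_ring)
  then have "coeff (([:2, 0, 1:] + [:0, 2:]) ^ n) n = (\<Sum>t\<le>n. real (n choose t) * 2 ^ (n - t) * coeff ([:2, 0, 1:] ^ t) t)"
  proof (simp add: coeff_sum, intro sum.cong refl)
    fix t assume "t \<in> {..n}"
    moreover have "[:0, 2 :: real:] ^ (n - t) = monom (2 ^ (n - t)) (n - t)"
      by (simp add: monom_altdef[of 2 1, simplified, symmetric] monom_power)
    ultimately show "coeff (of_nat (n choose t) * [:2, 0, 1:] ^ t * [:0, 2:] ^ (n - t)) n =
        real (n choose t) * 2 ^ (n - t) * coeff ([:2, 0, 1:] ^ t) t"
      by (subst mult.commute) (simp add: of_nat_poly coeff_monom_mult)
  qed
  moreover have "[:1, 1:] ^ 2 + 1 = [:2, 0, 1:] + [:0, 2 :: real:]"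
    by (simp add: power2_eq_square one_pCons)
  ultimately show ?thesis
    by simp
qed

lemma central_binomial_Suc: "Suc l * ((2 * Suc l) choose Suc l) = 2 * (2 * l + 1) * ((2 * l) choose l)"
proof -
  have "Suc l * (Suc (2 * l) choose Suc l) = Suc l * (Suc (2 * l) choose l)"
    using Suc_times_binomial_add[of l l] by (simp only: mult_2)
  then have sym: "Suc (2 * l) choose Suc l = Suc (2 * l) choose l"
    by (simp only: mult_cancel1) simp
  have "Suc l * ((2 * Suc l) choose Suc l) = 2 * (Suc l * (Suc (2 * l) choose Suc l))"
    using Suc_times_binomial[of l "Suc (2 * l)"] by (simp del: binomial_Suc_Suc add: sym)
  also have "Suc l * (Suc (2 * l) choose Suc l) = Suc (2 * l) * ((2 * l) choose l)"
    by (rule Suc_times_binomial)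
  finally show ?thesis
    by simp
qed

lemma central_binomial_power2_le: "(real ((2 * l) choose l) / 4 ^ l)\<^sup>2 * (2 * real l + 1) \<le> 1"
proof (induction l)
  case 0
  then show ?case by simp
next
  case (Suc l)
  define X Z :: real where "X = real ((2 * Suc l) choose Suc l)" and "Z = real ((2 * l) choose l)"
  define b c where "b = X / 4 ^ Suc l" and "c = Z / 4 ^ l"
  have rec: "(real l + 1) * X = 2 * (2 * real l + 1) * Z"
    using arg_cong[OF central_binomial_Suc[of l], of real] unfolding X_def Z_def
    by (simp del: binomial_Suc_Suc add: algebra_simps)
  have "(2 * real l + 2) * b = 2 * ((real l + 1) * X) / 4 ^ Suc l"
    unfolding b_def by (simp add: algebra_simps)
  also have "\<dots> = (2 * real l + 1) * c"
    unfolding rec c_def by (simp add: field_simps)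
  finally have "((2 * real l + 2) * b)\<^sup>2 = ((2 * real l + 1) * c)\<^sup>2"
    by simp
  then have sq: "(2 * real l + 2)\<^sup>2 * b\<^sup>2 = (2 * real l + 1)\<^sup>2 * c\<^sup>2"
    by (simp only: power_mult_distrib)
  have "(2 * real l + 2)\<^sup>2 * (b\<^sup>2 * (2 * real (Suc l) + 1)) = ((2 * real l + 2)\<^sup>2 * b\<^sup>2) * (2 * real l + 3)"
    by (simp add: algebra_simps)
  also have "\<dots> = ((2 * real l + 1) * (2 * real l + 3)) * (c\<^sup>2 * (2 * real l + 1))"
    unfolding sq by (simp add: power2_eq_square algebra_simps)
  also have "\<dots> \<le> (2 * real l + 2)\<^sup>2 * 1"
    using Suc.IH unfolding c_def Z_def by (intro mult_mono) (auto simp: power2_eq_square algebra_simps)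
  finally show ?case
    unfolding b_def X_def by (simp del: binomial_Suc_Suc)
qed

lemma sum_binomial_div_Suc_le:
  fixes x y :: real
  assumes "x > 0" "y \<ge> 0"
  shows "(\<Sum>t\<le>n. real (n choose t) * x ^ t * y ^ (n - t) / real (Suc t)) \<le> (x + y) ^ Suc n / (x * real (Suc n))"
proof -
  have "real (n choose t) / real (Suc t) = real (Suc n choose Suc t) / real (Suc n)" for t
    using Suc_times_binomial[of t n]
    by (simp add: field_simps del: binomial_Suc_Suc of_nat_Suc flip: of_nat_mult)
  then have "(\<Sum>t\<le>n. real (n choose t) * x ^ t * y ^ (n - t) / real (Suc t))
      = (\<Sum>t\<le>n. real (Suc n choose Suc t) * x ^ Suc t * y ^ (Suc n - Suc t) / (x * real (Suc n)))"
    using assms by (intro sum.cong refl) (simp add: field_simps del: binomial_Suc_Suc of_nat_Suc)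
  also have "\<dots> \<le> (\<Sum>j\<le>Suc n. real (Suc n choose j) * x ^ j * y ^ (Suc n - j)) / (x * real (Suc n))"
  proof -
    define f where "f j = real (Suc n choose j) * x ^ j * y ^ (Suc n - j)" for j
    have "(\<Sum>t\<le>n. f (Suc t)) \<le> f 0 + (\<Sum>t\<le>n. f (Suc t))"
      using assms by (simp add: f_def)
    then show ?thesis
      using assms unfolding sum_divide_distrib[symmetric] sum.atMost_Suc_shift[of f n, symmetric]
      by (intro divide_right_mono) (simp_all add: f_def)
  qed
  also have "\<dots> = (x + y) ^ Suc n / (x * real (Suc n))"
    by (simp only: binomial_ring)
  finally show ?thesis .
qed

lemma sum_binomial_binomial_double_power2_le:
  "(\<Sum>i\<le>n. real (n choose i) * real ((2 * i) choose n))\<^sup>2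
     \<le> (2 * sqrt 2 + 2) ^ (2 * n + 1) / (2 * sqrt 2 * real (Suc n))"
proof -
  define s :: real where "s = 2 * sqrt 2"
  define a where "a t = real (n choose t) * s ^ t * 2 ^ (n - t)" for t
  define e where "e t = (if even t then real (t choose (t div 2)) / 2 ^ t else 0)" for t
  have s: "s > 0" "s\<^sup>2 = 8"
    by (simp_all add: s_def power_mult_distrib)
  have a_nonneg: "a t \<ge> 0" for t
    using s by (simp add: a_def)
  \<comment> \<open>This bound supplies the factor \<open>1 / (n + 1)\<close> needed for the sharp rate.\<close>
  have e_power2: "(e t)\<^sup>2 \<le> 1 / real (Suc t)" for t
  proof (cases "even t")
    case True
    then obtain l where "t = 2 * l" by blast
    moreover have "(2 :: real) ^ (2 * l) = 4 ^ l"
      by (simp add: power_mult)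
    ultimately show ?thesis
      using central_binomial_power2_le[of l] by (simp add: e_def field_simps)
  qed (simp add: e_def)
  have "real (n choose t) * 2 ^ (n - t) * coeff ([:2, 0, 1:] ^ t) t = a t * 1 * e t" for t
  proof (cases "even t")
    case True
    then obtain l where t: "t = 2 * l" by blast
    have "s ^ t = 2 ^ (t div 2) * 2 ^ t"
      using s(2) by (simp add: t power_mult flip: power_mult_distrib)
    then show ?thesis
      by (simp add: a_def e_def coeff_x2p2_power True)
  qed (simp add: a_def e_def coeff_x2p2_power)
  then have "(\<Sum>i\<le>n. real (n choose i) * real ((2 * i) choose n))\<^sup>2 = (\<Sum>t\<le>n. a t * 1 * e t)\<^sup>2"
    by (simp add: sum_binomial_binomial_double)
  also have "\<dots> \<le> (\<Sum>t\<le>n. a t * 1\<^sup>2) * (\<Sum>t\<le>n. a t * (e t)\<^sup>2)"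
    by (rule weighted_Cauchy_Schwarz_sum) (rule a_nonneg)
  also have "\<dots> \<le> (\<Sum>t\<le>n. a t) * (\<Sum>t\<le>n. a t / real (Suc t))"
    using mult_left_mono[OF e_power2 a_nonneg]
    by (intro mult_mono sum_mono) (auto intro!: sum_nonneg mult_nonneg_nonneg a_nonneg)
  also have "\<dots> \<le> (s + 2) ^ n * ((s + 2) ^ Suc n / (s * real (Suc n)))"
  proof (rule mult_mono)
    show "(\<Sum>t\<le>n. a t) \<le> (s + 2) ^ n"
      by (simp add: a_def binomial_ring)
    show "(\<Sum>t\<le>n. a t / real (Suc t)) \<le> (s + 2) ^ Suc n / (s * real (Suc n))"
      unfolding a_def using s by (intro sum_binomial_div_Suc_le) simp_all
  qed (use s in \<open>auto intro!: sum_nonneg divide_nonneg_nonneg a_nonneg\<close>)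
  also have "\<dots> = (s + 2) ^ (2 * n + 1) / (s * real (Suc n))"
    by (simp add: power_add[symmetric] mult_2)
  finally show ?thesis
    unfolding s_def .
qed

lemma two_sqrt2_plus_2_power_bound:
  "(2 * sqrt 2 + 2) ^ (2 * n + 1) / (2 * sqrt 2 * real (Suc n)) * real (2 * n + 1) / 4 ^ n
     \<le> 4 * (1 + sqrt 2) ^ (2 * n)"
proof -
  have "(2 * sqrt 2 + 2)\<^sup>2 = 4 * (1 + sqrt 2)\<^sup>2"
    by (simp add: power2_eq_square algebra_simps)
  then have power: "(2 * sqrt 2 + 2) ^ (2 * n + 1) = (2 * sqrt 2 + 2) * 4 ^ n * (1 + sqrt 2) ^ (2 * n)"
    by (simp add: power_mult power_mult_distrib)
  have rearrange: "(2 * t + 2) * q * r / (2 * t * m) * k / q = ((t + 1) / t) * (k / m) * r"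
    if "q \<noteq> 0" "t \<noteq> 0" "m \<noteq> 0" for q r t m k :: real
    using that by (simp add: field_simps)
  have "(2 * sqrt 2 + 2) ^ (2 * n + 1) / (2 * sqrt 2 * real (Suc n)) * real (2 * n + 1) / 4 ^ n
      = ((sqrt 2 + 1) / sqrt 2) * (real (2 * n + 1) / real (Suc n)) * (1 + sqrt 2) ^ (2 * n)"
    unfolding power by (rule rearrange) simp_all
  also have "\<dots> \<le> 2 * 2 * (1 + sqrt 2) ^ (2 * n)"
  proof (intro mult_right_mono mult_mono)
    have "1 \<le> sqrt 2"
      by simp
    then show "(sqrt 2 + 1) / sqrt 2 \<le> 2"
      by (simp add: field_simps)
  qed (simp_all add: field_simps)
  finally show ?thesis
    by simp
qed

lemma legendre_rodrigues_coeff_ratio_le: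
  "(\<Sum>k<N. (coeff (legendre_rodrigues n) k)\<^sup>2) / poly_mean (legendre_rodrigues n * legendre_rodrigues n)
     \<le> 4 * (1 + sqrt 2) ^ (2 * n)"
proof -
  define c where "c = coeff (legendre_rodrigues n)"
  define S where "S = (\<Sum>i\<le>n. real (n choose i) * real ((2 * i) choose n))"
  have "(\<Sum>k<N. \<bar>c k\<bar>) \<le> (\<Sum>k<N + Suc n. \<bar>c k\<bar>)"
    by (intro sum_mono2) auto
  also have "\<dots> = (\<Sum>k\<le>n. \<bar>c k\<bar>)"
    by (rule sum.mono_neutral_right) (auto simp: c_def coeff_eq_0 degree_legendre_rodrigues)
  also have "\<dots> \<le> fact n * S"
    unfolding c_def S_def by (rule sum_abs_coeff_legendre_rodrigues)
  finally have "(\<Sum>k<N. (c k)\<^sup>2) \<le> (fact n * S)\<^sup>2"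
    using L2_set_le_sum_abs[of c "{..<N}"]
    by (intro sqrt_le_D) (auto simp: L2_set_def intro: order.trans)
  then have "(\<Sum>k<N. (c k)\<^sup>2) / poly_mean (legendre_rodrigues n * legendre_rodrigues n)
      \<le> (fact n * S)\<^sup>2 / poly_mean (legendre_rodrigues n * legendre_rodrigues n)"
    by (rule divide_right_mono) (simp add: poly_mean_legendre_rodrigues_square)
  also have "\<dots> = S\<^sup>2 * real (2 * n + 1) / 4 ^ n"
    by (simp add: poly_mean_legendre_rodrigues_square power_mult_distrib)
  also have "\<dots> \<le> (2 * sqrt 2 + 2) ^ (2 * n + 1) / (2 * sqrt 2 * real (Suc n)) * real (2 * n + 1) / 4 ^ n"
    unfolding S_def
    by (intro divide_right_mono mult_right_mono sum_binomial_binomial_double_power2_le) simp_all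
  also have "\<dots> \<le> 4 * (1 + sqrt 2) ^ (2 * n)"
    by (rule two_sqrt2_plus_2_power_bound)
  finally show ?thesis
    by (simp add: c_def)
qed

lemma sum_coeff_power2_le_growth_poly_mean_square:
  assumes "\<forall>k\<ge>N. coeff p k = 0"
  shows "(\<Sum>k<N. (coeff p k)\<^sup>2) \<le> (1 + sqrt 2) ^ (2 * N) * poly_mean (p * p)"
proof -
  define g :: real where "g = (1 + sqrt 2)\<^sup>2"
  have g: "g - 1 \<ge> 4"
    by (simp add: g_def power2_eq_square algebra_simps)
  have "(\<Sum>n<N. (\<Sum>k<N. (coeff (legendre_rodrigues n) k)\<^sup>2) / poly_mean (legendre_rodrigues n * legendre_rodrigues n))
      \<le> (\<Sum>n<N. 4 * g ^ n)"
    by (intro sum_mono) (simp add: g_def legendre_rodrigues_coeff_ratio_le flip: power_mult)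
  also have "\<dots> = 4 * (g ^ N - 1) / (g - 1)"
    using g by (simp add: sum_distrib_left[symmetric] geometric_sum)
  also have "\<dots> \<le> 4 * g ^ N / (g - 1)"
    using g by (intro divide_right_mono) auto
  also have "\<dots> \<le> g ^ N"
  proof -
    have "4 * g ^ N \<le> (g - 1) * g ^ N"
      using g by (intro mult_right_mono) auto
    then show ?thesis
      using g by (simp add: pos_divide_le_eq)
  qed
  finally have "(\<Sum>k<N. (coeff p k)\<^sup>2) \<le> g ^ N * poly_mean (p * p)"
    using sum_coeff_power2_le_poly_mean_square[OF assms] poly_mean_square_nonneg[of p]
    by (meson mult_right_mono order.trans)
  then show ?thesis
    by (simp add: g_def power_mult)
qed

lemma poly_mean_square_monom_sum:
  "poly_mean ((\<Sum>k<N. monom (c k) k) * (\<Sum>k<N. monom (c k) k)) = (\<Sum>k<N. \<Sum>l<N. c k * c l * mean_power (k + l))"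
  by (simp add: sum_product poly_mean_sum mult_monom poly_mean_monom)

lemma sum_power2_le_growth_mean_power_form:
  "(\<Sum>k<N. (c k)\<^sup>2) \<le> (1 + sqrt 2) ^ (2 * N) * (\<Sum>k<N. \<Sum>l<N. c k * c l * mean_power (k + l))"
proof -
  define p where "p = (\<Sum>k<N. monom (c k) k)"
  have coeff_p: "coeff p k = (if k < N then c k else 0)" for k
    by (simp add: p_def coeff_sum coeff_monom)
  then have "(\<Sum>k<N. (c k)\<^sup>2) = (\<Sum>k<N. (coeff p k)\<^sup>2)"
    by simp
  also have "\<dots> \<le> (1 + sqrt 2) ^ (2 * N) * poly_mean (p * p)"
    by (rule sum_coeff_power2_le_growth_poly_mean_square) (simp add: coeff_p)
  finally show ?thesis
    by (simp add: p_def poly_mean_square_monom_sum)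
qed

section \<open>Riemann sums and the discrete Gram form\<close>

lemma abs_power_diff_le:
  fixes u x :: real
  assumes "\<bar>u\<bar> \<le> 1" "\<bar>x\<bar> \<le> 1"
  shows "\<bar>u ^ i - x ^ i\<bar> \<le> real i * \<bar>u - x\<bar>"
proof (induction i)
  case 0
  then show ?case by simp
next
  case (Suc i)
  have "\<bar>u ^ Suc i - x ^ Suc i\<bar> = \<bar>u * (u ^ i - x ^ i) + x ^ i * (u - x)\<bar>"
    by (simp add: algebra_simps)
  also have "\<dots> \<le> \<bar>u\<bar> * \<bar>u ^ i - x ^ i\<bar> + \<bar>x\<bar> ^ i * \<bar>u - x\<bar>"
    by (metis abs_mult abs_triangle_ineq power_abs)
  also have "\<dots> \<le> 1 * (real i * \<bar>u - x\<bar>) + 1 * \<bar>u - x\<bar>"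
    using assms Suc.IH by (intro add_mono mult_mono) (auto simp: power_le_one)
  finally show ?case
    by (simp add: algebra_simps)
qed

lemma abs_power_mult_power_diff_le:
  fixes u v x :: real
  assumes "\<bar>u\<bar> \<le> 1" "\<bar>v\<bar> \<le> 1" "\<bar>x\<bar> \<le> 1"
  shows "\<bar>u ^ i * v ^ k - x ^ (i + k)\<bar> \<le> real i * \<bar>u - x\<bar> + real k * \<bar>v - x\<bar>"
proof -
  have "\<bar>u ^ i * v ^ k - x ^ (i + k)\<bar> = \<bar>(u ^ i - x ^ i) * v ^ k + x ^ i * (v ^ k - x ^ k)\<bar>"
    by (simp add: power_add algebra_simps)
  also have "\<dots> \<le> \<bar>u ^ i - x ^ i\<bar> * \<bar>v\<bar> ^ k + \<bar>x\<bar> ^ i * \<bar>v ^ k - x ^ k\<bar>"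
    by (metis abs_mult abs_triangle_ineq power_abs)
  also have "\<dots> \<le> (real i * \<bar>u - x\<bar>) * 1 + 1 * (real k * \<bar>v - x\<bar>)"
    using assms by (intro add_mono mult_mono abs_power_diff_le) (auto simp: power_le_one)
  finally show ?thesis
    by simp
qed

lemma power_Suc_diff_quadrature_error:
  fixes a b x :: real
  assumes "a \<le> x" "x \<le> b" "\<bar>a\<bar> \<le> 1" "\<bar>b\<bar> \<le> 1"
  shows "\<bar>(b ^ Suc j - a ^ Suc j) / real (Suc j) - (b - a) * x ^ j\<bar> \<le> real j * (b - a)\<^sup>2"
proof -
  have term_error: "\<bar>b ^ i * a ^ (j - i) - x ^ j\<bar> \<le> real j * (b - a)" if "i < Suc j" for i
  proof -
    have "\<bar>b ^ i * a ^ (j - i) - x ^ j\<bar> \<le> real i * \<bar>b - x\<bar> + real (j - i) * \<bar>a - x\<bar>"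
      using abs_power_mult_power_diff_le[of b a x i "j - i"] assms that by auto
    also have "\<dots> \<le> real i * (b - a) + real (j - i) * (b - a)"
      using assms by (intro add_mono mult_left_mono) auto
    also have "\<dots> = real j * (b - a)"
      using that by (simp add: of_nat_diff algebra_simps)
    finally show ?thesis .
  qed
  have "b ^ Suc j - a ^ Suc j = (b - a) * (\<Sum>i<Suc j. b ^ i * a ^ (j - i))"
    by (rule diff_power_eq_sum)
  then have "(b ^ Suc j - a ^ Suc j) / real (Suc j) - (b - a) * x ^ j
      = (b - a) / real (Suc j) * (\<Sum>i<Suc j. b ^ i * a ^ (j - i) - x ^ j)"
    by (simp add: sum_subtractf field_simps del: of_nat_Suc sum.lessThan_Suc)
  also have "\<bar>\<dots>\<bar> = (b - a) / real (Suc j) * \<bar>\<Sum>i<Suc j. b ^ i * a ^ (j - i) - x ^ j\<bar>"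
    using assms by (simp add: abs_mult del: sum.lessThan_Suc)
  also have "\<dots> \<le> (b - a) / real (Suc j) * (\<Sum>i<Suc j. real j * (b - a))"
    using assms term_error
    by (intro mult_left_mono order.trans[OF sum_abs] sum_mono) (auto simp del: sum.lessThan_Suc)
  also have "\<dots> = real j * (b - a)\<^sup>2"
    by (simp add: power2_eq_square)
  finally show ?thesis .
qed

lemma mean_node_power_error:
  assumes "M \<ge> 1" "0 \<le> \<delta>" "\<delta> \<le> 2 / real M"
  shows "\<bar>(1 / real M) * (\<Sum>m<M. node M \<delta> m ^ j) - mean_power j\<bar> \<le> 2 * real j / real M"
proof -
  define h where "h = 2 / real M"
  define a where "a m = -1 + h * real m" for m
  have "real M > 0"
    using assms(1) by simp
  have a_Suc: "a (Suc m) = a m + h" for m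
    by (simp add: a_def algebra_simps)
  have node_a: "node M \<delta> m = a m + \<delta>" for m
    by (simp add: node_def a_def h_def)
  have abs_a: "\<bar>a m\<bar> \<le> 1" if "m \<le> M" for m
    using that \<open>real M > 0\<close> by (simp add: a_def h_def abs_le_iff field_simps)
  have "a M = 1"
    using \<open>real M > 0\<close> by (simp add: a_def h_def)
  then have "(\<Sum>m<M. a (Suc m) ^ Suc j - a m ^ Suc j) = real (Suc j) * (2 * mean_power j)"
    unfolding sum_lessThan_telescope[of "\<lambda>m. a m ^ Suc j"] by (simp add: a_def mean_power_def del: of_nat_Suc)
  then have "\<bar>h * (\<Sum>m<M. node M \<delta> m ^ j) - 2 * mean_power j\<bar>
      = \<bar>\<Sum>m<M. (a (Suc m) ^ Suc j - a m ^ Suc j) / real (Suc j) - (a (Suc m) - a m) * node M \<delta> m ^ j\<bar>"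
    by (simp add: a_Suc sum_subtractf sum_distrib_left sum_divide_distrib[symmetric] abs_minus_commute
        del: of_nat_Suc)
  also have "\<dots> \<le> (\<Sum>m<M. real j * (a (Suc m) - a m)\<^sup>2)"
  proof (intro order.trans[OF sum_abs] sum_mono)
    fix m assume "m \<in> {..<M}"
    then have "a m \<le> node M \<delta> m" "node M \<delta> m \<le> a (Suc m)" "\<bar>a m\<bar> \<le> 1" "\<bar>a (Suc m)\<bar> \<le> 1"
      using assms(2,3) abs_a[of m] abs_a[of "Suc m"] by (simp_all add: node_a a_Suc h_def)
    then show "\<bar>(a (Suc m) ^ Suc j - a m ^ Suc j) / real (Suc j) - (a (Suc m) - a m) * node M \<delta> m ^ j\<bar>
        \<le> real j * (a (Suc m) - a m)\<^sup>2"
      by (rule power_Suc_diff_quadrature_error)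
  qed
  also have "\<dots> = 2 * (2 * real j / real M)"
    using \<open>real M > 0\<close> by (simp add: a_Suc h_def power2_eq_square field_simps)
  finally show ?thesis
    by (simp add: h_def abs_mult flip: abs_mult_pos[of 2] right_diff_distrib)
qed

lemma abs_quadratic_form_le:
  fixes c :: "nat \<Rightarrow> real"
  assumes "0 \<le> \<epsilon>" "\<And>k l. k < N \<Longrightarrow> l < N \<Longrightarrow> \<bar>E k l\<bar> \<le> \<epsilon>"
  shows "\<bar>\<Sum>k<N. \<Sum>l<N. c k * c l * E k l\<bar> \<le> \<epsilon> * real N * (\<Sum>k<N. (c k)\<^sup>2)"
proof -
  have "\<bar>\<Sum>k<N. \<Sum>l<N. c k * c l * E k l\<bar> \<le> (\<Sum>k<N. \<Sum>l<N. \<bar>c k\<bar> * \<bar>c l\<bar> * \<epsilon>)"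
    using assms(2)
    by (intro order.trans[OF sum_abs] sum_mono order.trans[OF sum_abs])
      (auto simp: abs_mult intro!: mult_left_mono)
  also have "\<dots> = \<epsilon> * (\<Sum>k<N. \<bar>c k\<bar>)\<^sup>2"
    by (simp add: power2_eq_square sum_product sum_distrib_left mult_ac)
  also have "\<dots> \<le> \<epsilon> * (real N * (\<Sum>k<N. (c k)\<^sup>2))"
    using sum_squared_le_sum_of_squares[of "\<lambda>k. \<bar>c k\<bar>" "{..<N}"] assms(1)
    by (intro mult_left_mono) (simp_all add: mult.commute)
  finally show ?thesis
    by (simp add: mult.assoc)
qed

lemma hatH_quadratic_form_ge:
  assumes "M \<ge> 1" "0 \<le> \<delta>" "\<delta> \<le> 2 / real M"
    and M_large: "8 * real N ^ 2 * (1 + sqrt 2) ^ (2 * N) \<le> real M"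
  shows "(\<Sum>k<N. (c k)\<^sup>2) / (2 * (1 + sqrt 2) ^ (2 * N)) \<le> (\<Sum>k<N. \<Sum>l<N. c k * c l * hatH M \<delta> N $$ (k, l))"
proof -
  define g :: real where "g = (1 + sqrt 2) ^ (2 * N)"
  define S where "S = (\<Sum>k<N. (c k)\<^sup>2)"
  define G where "G = (\<Sum>k<N. \<Sum>l<N. c k * c l * mean_power (k + l))"
  define Q where "Q = (\<Sum>k<N. \<Sum>l<N. c k * c l * hatH M \<delta> N $$ (k, l))"
  have "g > 0"
    unfolding g_def by (intro zero_less_power) (simp add: add_pos_nonneg)
  have "real M > 0" "S \<ge> 0"
    using assms(1) by (simp_all add: S_def sum_nonneg)
  have "\<bar>hatH M \<delta> N $$ (k, l) - mean_power (k + l)\<bar> \<le> 4 * real N / real M" if "k < N" "l < N" for k l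
  proof -
    have "\<bar>hatH M \<delta> N $$ (k, l) - mean_power (k + l)\<bar> \<le> 2 * real (k + l) / real M"
      using mean_node_power_error[OF assms(1-3), of "k + l"] that by (simp add: hatH_def power_add)
    also have "\<dots> \<le> 4 * real N / real M"
      using that \<open>real M > 0\<close> by (intro divide_right_mono) auto
    finally show ?thesis .
  qed
  then have "\<bar>Q - G\<bar> \<le> 4 * real N / real M * real N * S"
    unfolding Q_def G_def S_def sum_subtractf[symmetric] right_diff_distrib[symmetric]
    by (intro abs_quadratic_form_le) simp_all
  also have "\<dots> \<le> 1 / (2 * g) * S"
  proof (intro mult_right_mono)
    show "4 * real N / real M * real N \<le> 1 / (2 * g)"
      using M_large \<open>g > 0\<close> \<open>real M > 0\<close> by (simp add: g_def field_simps power2_eq_square)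
  qed (rule \<open>S \<ge> 0\<close>)
  finally have "G - 1 / (2 * g) * S \<le> Q"
    by linarith
  moreover have "S \<le> g * G"
    unfolding S_def g_def G_def by (rule sum_power2_le_growth_mean_power_form)
  then have "S / g \<le> G"
    using \<open>g > 0\<close> by (simp add: pos_divide_le_eq mult.commute)
  moreover have "S / (2 * g) = S / g - 1 / (2 * g) * S"
    using \<open>g > 0\<close> by (simp add: field_simps)
  ultimately have "S / (2 * g) \<le> Q"
    by linarith
  then show ?thesis
    by (simp add: Q_def S_def g_def)
qed

section \<open>Coercive matrices\<close>

lemma quadratic_form_mat:
  fixes A :: "'a :: comm_semiring_0 mat"
  assumes "A \<in> carrier_mat N N" "v \<in> carrier_vec N"
  shows "v \<bullet> (A *\<^sub>v v) = (\<Sum>k<N. \<Sum>l<N. v $ k * v $ l * A $$ (k, l))"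
  using assms
  by (auto simp: scalar_prod_def row_def lessThan_atLeast0 sum_distrib_left mult_ac intro!: sum.cong)

lemma inv_mat_eqI:
  assumes "A \<in> carrier_mat N N" "B \<in> carrier_mat N N" "A * B = 1\<^sub>m N" "B * A = 1\<^sub>m N"
  shows "inv_mat A = B"
  unfolding inv_mat_def
proof (rule the_equality)
  show "B \<in> carrier_mat (dim_row A) (dim_row A) \<and> inverts_mat A B \<and> inverts_mat B A"
    using assms unfolding inverts_mat_def by auto
next
  fix B' assume "B' \<in> carrier_mat (dim_row A) (dim_row A) \<and> inverts_mat A B' \<and> inverts_mat B' A"
  then have B': "B' \<in> carrier_mat N N" "B' * A = 1\<^sub>m N"
    using assms(1) unfolding inverts_mat_def by auto
  have "B' = B' * (A * B)"
    using B'(1) assms(3) by simp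
  also have "\<dots> = (B' * A) * B"
    using B'(1) assms(1,2) by (simp add: assoc_mult_mat)
  finally show "B' = B"
    using B'(2) assms(2) by simp
qed

lemma ell2_opnorm_lift_op_le:
  assumes B: "B \<in> carrier_mat N N" and "0 \<le> C"
    and bound: "\<And>w. w \<in> carrier_vec N \<Longrightarrow> (\<Sum>k<N. ((B *\<^sub>v w) $ k)\<^sup>2) \<le> C\<^sup>2 * (\<Sum>k<N. (w $ k)\<^sup>2)"
  shows "ell2_opnorm (lift_op B) \<le> C"
  unfolding ell2_opnorm_def
proof (rule cSup_least)
  have "ell2_norm (lift_op B (\<lambda>_. 0)) \<in> {ell2_norm (lift_op B v) |v. summable (\<lambda>i. (v i)\<^sup>2) \<and> ell2_norm v \<le> 1}"
    by (intro CollectI exI[of _ "\<lambda>_. 0"]) (simp add: ell2_norm_def)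
  then show "{ell2_norm (lift_op B v) |v. summable (\<lambda>i. (v i)\<^sup>2) \<and> ell2_norm v \<le> 1} \<noteq> {}"
    by blast
next
  fix x assume "x \<in> {ell2_norm (lift_op B v) |v. summable (\<lambda>i. (v i)\<^sup>2) \<and> ell2_norm v \<le> 1}"
  then obtain v where x: "x = ell2_norm (lift_op B v)" and "summable (\<lambda>i. (v i)\<^sup>2)"
    and "ell2_norm v \<le> 1"
    by auto
  define w where "w = vec N v"
  have lift: "lift_op B v i = (if i < N then (B *\<^sub>v w) $ i else 0)" for i
    using B unfolding lift_op_def w_def
    by (auto simp: scalar_prod_def row_def lessThan_atLeast0 intro!: sum.cong)
  have "(\<Sum>k<N. (v k)\<^sup>2) \<le> (\<Sum>i. (v i)\<^sup>2)"
    using \<open>summable (\<lambda>i. (v i)\<^sup>2)\<close> by (intro sum_le_suminf) auto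
  also have "(\<Sum>i. (v i)\<^sup>2) \<le> 1"
    using \<open>ell2_norm v \<le> 1\<close> unfolding ell2_norm_def by simp
  finally have "(\<Sum>k<N. (v k)\<^sup>2) \<le> 1" .
  have "(\<Sum>i. (lift_op B v i)\<^sup>2) = (\<Sum>i<N. ((B *\<^sub>v w) $ i)\<^sup>2)"
    by (subst suminf_finite[of "{..<N}"]) (auto simp: lift)
  also have "\<dots> \<le> C\<^sup>2 * (\<Sum>k<N. (v k)\<^sup>2)"
    using bound[of w] by (simp add: w_def)
  also have "\<dots> \<le> C\<^sup>2"
    using \<open>(\<Sum>k<N. (v k)\<^sup>2) \<le> 1\<close> by (simp add: mult_left_le)
  finally have "(\<Sum>i. (lift_op B v i)\<^sup>2) \<le> C\<^sup>2" .
  then show "x \<le> C"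
    unfolding x ell2_norm_def by (rule real_le_lsqrt[OF \<open>0 \<le> C\<close>])
qed

lemma coercive_mat_inverse:
  fixes A :: "real mat"
  assumes A: "A \<in> carrier_mat N N" and "\<alpha> > 0"
    and coercive: "\<And>c. \<alpha> * (\<Sum>k<N. (c k)\<^sup>2) \<le> (\<Sum>k<N. \<Sum>l<N. c k * c l * A $$ (k, l))"
  shows "invertible_mat A \<and> ell2_opnorm (lift_op (inv_mat A)) \<le> 1 / \<alpha>"
proof -
  have coercive_vec: "\<alpha> * (\<Sum>k<N. (v $ k)\<^sup>2) \<le> v \<bullet> (A *\<^sub>v v)" if "v \<in> carrier_vec N" for v
    using coercive[of "\<lambda>k. v $ k"] quadratic_form_mat[OF A that] by simp
  have "det A \<noteq> 0"
  proof
    assume "det A = 0"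
    then obtain v where v: "v \<in> carrier_vec N" "v \<noteq> 0\<^sub>v N" "A *\<^sub>v v = 0\<^sub>v N"
      using det_0_iff_vec_prod_zero_field[OF A] by auto
    then have "\<alpha> * (\<Sum>k<N. (v $ k)\<^sup>2) \<le> 0"
      using coercive_vec[OF v(1)] by simp
    then have "(\<Sum>k<N. (v $ k)\<^sup>2) = 0"
      using \<open>\<alpha> > 0\<close> by (intro antisym) (simp_all add: mult_le_0_iff sum_nonneg leD)
    then have "\<forall>k\<in>{..<N}. (v $ k)\<^sup>2 = 0"
      by (simp add: sum_nonneg_eq_0_iff)
    then show False
      using v(1,2) by (auto intro!: eq_vecI)
  qed
  then have "A \<in> Units (ring_mat TYPE(real) N ())"
    by (rule det_non_zero_imp_unit[OF A])
  then obtain B where B: "B \<in> carrier_mat N N" and AB: "A * B = 1\<^sub>m N" and BA: "B * A = 1\<^sub>m N"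
    unfolding Units_def ring_mat_def by auto
  have "invertible_mat A"
    unfolding invertible_mat_def inverts_mat_def using A B AB BA by auto
  moreover have "ell2_opnorm (lift_op B) \<le> 1 / \<alpha>"
  proof (rule ell2_opnorm_lift_op_le[OF B])
    fix w :: "real vec" assume w: "w \<in> carrier_vec N"
    define y where "y = B *\<^sub>v w"
    define Y W where "Y = (\<Sum>k<N. (y $ k)\<^sup>2)" and "W = (\<Sum>k<N. (w $ k)\<^sup>2)"
    have "y \<in> carrier_vec N"
      using B w by (simp add: y_def)
    moreover have "A *\<^sub>v y = w"
      using A B w AB by (simp add: y_def flip: assoc_mult_mat_vec)
    ultimately have "\<alpha> * Y \<le> (\<Sum>k<N. y $ k * w $ k)"
      using coercive_vec[of y] w by (simp add: Y_def scalar_prod_def lessThan_atLeast0)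
    then have "(\<alpha> * Y)\<^sup>2 \<le> Y * W"
      using Cauchy_Schwarz_ineq_sum[of "\<lambda>k. y $ k" "\<lambda>k. w $ k" "{..<N}"] \<open>\<alpha> > 0\<close>
      by (auto simp: Y_def W_def sum_nonneg intro: order.trans[OF power_mono])
    then have "(\<alpha>\<^sup>2 * Y) * Y \<le> W * Y"
      by (simp add: power2_eq_square mult_ac)
    moreover have "Y \<ge> 0" "W \<ge> 0"
      by (simp_all add: Y_def W_def sum_nonneg)
    ultimately have "\<alpha>\<^sup>2 * Y \<le> W"
      by (cases "Y = 0") (auto dest: mult_right_le_imp_le)
    then show "(\<Sum>k<N. ((B *\<^sub>v w) $ k)\<^sup>2) \<le> (1 / \<alpha>)\<^sup>2 * (\<Sum>k<N. (w $ k)\<^sup>2)"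
      using \<open>\<alpha> > 0\<close> by (simp add: Y_def W_def y_def field_simps)
  qed (use \<open>\<alpha> > 0\<close> in simp)
  ultimately show ?thesis
    using inv_mat_eqI[OF A B AB BA] by simp
qed

theorem lemma12:
  fixes \<gamma> :: real
  defines "\<gamma> \<equiv> (1 + sqrt 2)\<^sup>2"
  shows "\<exists>C1 C2 :: real. C1 > 0 \<and> C2 > 0 \<and>
    (\<forall>(N::nat) (M::nat) (\<delta>::real).
       M \<ge> 1 \<longrightarrow> real M \<ge> C1 * real N ^ 2 * \<gamma> ^ N \<longrightarrow> 0 \<le> \<delta> \<longrightarrow> \<delta> \<le> 2 / real M \<longrightarrow>
       invertible_mat (hatH M \<delta> N) \<and>
       ell2_opnorm (lift_op (inv_mat (hatH M \<delta> N))) \<le> C2 * \<gamma> ^ N)"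
proof -
  have "invertible_mat (hatH M \<delta> N) \<and> ell2_opnorm (lift_op (inv_mat (hatH M \<delta> N))) \<le> 2 * \<gamma> ^ N"
    if "M \<ge> 1" "real M \<ge> 8 * real N ^ 2 * \<gamma> ^ N" "0 \<le> \<delta>" "\<delta> \<le> 2 / real M" for N M \<delta>
  proof -
    have \<gamma>_power: "\<gamma> ^ N = (1 + sqrt 2) ^ (2 * N)"
      by (simp add: \<gamma>_def power_mult)
    have "\<gamma> ^ N > 0"
      unfolding \<gamma>_power by (simp add: add_pos_nonneg)
    have "invertible_mat (hatH M \<delta> N) \<and> ell2_opnorm (lift_op (inv_mat (hatH M \<delta> N))) \<le> 1 / (1 / (2 * \<gamma> ^ N))"
    proof (rule coercive_mat_inverse)
      fix c :: "nat \<Rightarrow> real"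
      show "1 / (2 * \<gamma> ^ N) * (\<Sum>k<N. (c k)\<^sup>2) \<le> (\<Sum>k<N. \<Sum>l<N. c k * c l * hatH M \<delta> N $$ (k, l))"
        using hatH_quadratic_form_ge[OF that(1,3,4)] that(2) by (simp add: \<gamma>_power)
    qed (use \<open>\<gamma> ^ N > 0\<close> in \<open>simp_all add: hatH_def\<close>)
    then show ?thesis
      by simp
  qed
  then show ?thesis
    by (intro exI[of _ 8] exI[of _ 2]) simp
qed

end
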